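(* In the lookdown representation, for each $n$, the map $i\mapsto\tau((n,i))$ is non-increasing on $\{1,\dots,X_n\}$, where $\tau(v)=\inf\{m:D_m(v)=\emptyset\}$.
   Context: Data: $\tau\in\mathbb{N}\cup\{\infty\}$, positive integers $(X_n)_{n<\tau}$, vectors $k_n=(k_n(i))_{i=1}^{X_n}$ of nonnegative integers with $\sum_ik_n(i)=X_{n+1}$. $V_n=\{(n,i):1\le i\le X_n\}$. Lookdown representation: for each $n$ fix a partition $\xi_n$ of $\{1,\dots,X_{n+1}\}$ whose block sizes are the nonzero entries of $k_n$; let $(\sigma_n)$ be independent uniform random permutations of $\{1,\dots,X_{n+1}\}$; list the blocks of $\{\sigma_n(A):A\in\xi_n\}$ in increasing order of least element as $B_1,\dots,B_{\ell_n}$; edges are $((n,i),(n+1,j))$, $j\in B_i$. For $v\in V_n$, $m\ge n$, $D_m(v)$ denotes the descendants of $v$ in generation $m$ (empty if $m\ge\tau$); $\inf\emptyset=\infty$. *)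

theory Defs
  imports Main "HOL-Library.Extended_Nat" "HOL-Library.Multiset"
    "HOL-Library.Disjoint_Sets" "HOL-Combinatorics.Permutations"
begin

text \<open>Generations are indexed by n with enat n < T
  (T plays the role of tau). Vertex (n,i) is encoded by the pair of indices n, i
  with 1 \<le> i \<le> X n. xi n is the fixed partition of {1..X(n+1)}, sigma n the
  permutation of {1..X(n+1)}.\<close>

definition ld_blocks :: "(nat \<Rightarrow> nat set set) \<Rightarrow> (nat \<Rightarrow> nat \<Rightarrow> nat) \<Rightarrow> nat \<Rightarrow> nat set set" where
  "ld_blocks xi sigma n = (\<lambda>A. sigma n ` A) ` xi n"

definition ordered_block :: "nat set set \<Rightarrow> nat \<Rightarrow> nat set" where
  "ordered_block P i = (THE A. A \<in> P \<and> card {C \<in> P. Min C < Min A} + 1 = i)"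

definition ld_edge :: "enat \<Rightarrow> (nat \<Rightarrow> nat) \<Rightarrow> (nat \<Rightarrow> nat set set) \<Rightarrow> (nat \<Rightarrow> nat \<Rightarrow> nat)
    \<Rightarrow> nat \<Rightarrow> nat \<Rightarrow> nat \<Rightarrow> bool" where
  "ld_edge T X xi sigma n i j \<longleftrightarrow>
     enat (Suc n) < T \<and> 1 \<le> i \<and> i \<le> X n \<and> i \<le> card (ld_blocks xi sigma n)
     \<and> j \<in> ordered_block (ld_blocks xi sigma n) i"

text \<open>ld_desc T X xi sigma n i d = D_{n+d}((n,i)) (as a set of indices in generation n+d).\<close>
fun ld_desc :: "enat \<Rightarrow> (nat \<Rightarrow> nat) \<Rightarrow> (nat \<Rightarrow> nat set set) \<Rightarrow> (nat \<Rightarrow> nat \<Rightarrow> nat)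
    \<Rightarrow> nat \<Rightarrow> nat \<Rightarrow> nat \<Rightarrow> nat set" where
  "ld_desc T X xi sigma n i 0 = (if enat n < T \<and> 1 \<le> i \<and> i \<le> X n then {i} else {})"
| "ld_desc T X xi sigma n i (Suc d) =
     {j. \<exists>l \<in> ld_desc T X xi sigma n i d. ld_edge T X xi sigma (n + d) l j}"

definition ld_D :: "enat \<Rightarrow> (nat \<Rightarrow> nat) \<Rightarrow> (nat \<Rightarrow> nat set set) \<Rightarrow> (nat \<Rightarrow> nat \<Rightarrow> nat)
    \<Rightarrow> nat \<Rightarrow> nat \<Rightarrow> nat \<Rightarrow> nat set" where
  "ld_D T X xi sigma n i m = ld_desc T X xi sigma n i (m - n)"

text \<open>Extinction time tau(v) = inf {m : D_m(v) = {}} (inf of empty set = \<infinity>).\<close>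
definition ld_ext :: "enat \<Rightarrow> (nat \<Rightarrow> nat) \<Rightarrow> (nat \<Rightarrow> nat set set) \<Rightarrow> (nat \<Rightarrow> nat \<Rightarrow> nat)
    \<Rightarrow> nat \<Rightarrow> nat \<Rightarrow> enat" where
  "ld_ext T X xi sigma n i = Inf {enat m | m. n \<le> m \<and> ld_D T X xi sigma n i m = {}}"

end

theory Submission
  imports Defs
begin

text \<open>Listing blocks by least element is monotone: if (n,j) with i \<le> j has a child c',
  then c' lies in the j-th block, whose least element is at least that of the i-th block,
  so (n,i) has a child c \<le> c'. Inductively every descendant of (n,j) in generation m is
  bounded below by a descendant of (n,i), hence (n,i) survives whenever (n,j) does.\<close>

definition block_rank :: "'a::linorder set set \<Rightarrow> 'a set \<Rightarrow> nat" where
  "block_rank P A = card {C \<in> P. Min C < Min A}"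

lemma block_rank_strict_mono:
  assumes "finite P" "A \<in> P" "B \<in> P" "Min A < Min B"
  shows "block_rank P A < block_rank P B"
  unfolding block_rank_def
proof (rule psubset_card_mono)
  show "finite {C \<in> P. Min C < Min B}" using assms(1) by simp
  show "{C \<in> P. Min C < Min A} \<subset> {C \<in> P. Min C < Min B}" using assms by auto
qed

lemma block_rank_bij:
  assumes fin: "finite P" and inj: "inj_on Min P"
  shows "bij_betw (block_rank P) P {0..<card P}"
proof -
  have inj_rank: "inj_on (block_rank P) P"
  proof (rule inj_onI)
    fix A B assume AB: "A \<in> P" "B \<in> P" "block_rank P A = block_rank P B"
    then have "Min A = Min B"
      using block_rank_strict_mono[OF fin] by (metis less_irrefl linorder_neqE)
    then show "A = B" using inj AB by (meson inj_onD)
  qed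
  have "block_rank P A < card P" if "A \<in> P" for A
    unfolding block_rank_def using that fin by (intro psubset_card_mono) auto
  then have "block_rank P ` P \<subseteq> {0..<card P}" by auto
  moreover have "card (block_rank P ` P) = card {0..<card P}"
    using card_image[OF inj_rank] by simp
  ultimately show ?thesis
    unfolding bij_betw_def using inj_rank by (simp add: card_subset_eq)
qed

lemma ordered_block_rank:
  assumes fin: "finite P" and inj: "inj_on Min P" and i: "1 \<le> i" "i \<le> card P"
  shows "ordered_block P i \<in> P \<and> block_rank P (ordered_block P i) + 1 = i"
proof -
  have bij: "bij_betw (block_rank P) P {0..<card P}" by (rule block_rank_bij[OF fin inj])
  moreover have "i - 1 \<in> {0..<card P}" using i by simp
  ultimately obtain A where A: "A \<in> P" "block_rank P A + 1 = i"
    using i by (metis bij_betw_imp_surj_on imageE le_add_diff_inverse2)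
  have "ordered_block P i = A"
    unfolding ordered_block_def
  proof (rule the_equality)
    show "A \<in> P \<and> card {C \<in> P. Min C < Min A} + 1 = i" using A by (simp add: block_rank_def)
    fix B assume "B \<in> P \<and> card {C \<in> P. Min C < Min B} + 1 = i"
    then have "B \<in> P" "block_rank P B = block_rank P A" using A by (auto simp: block_rank_def)
    then show "B = A" using A(1) bij_betw_imp_inj_on[OF bij] by (simp add: inj_on_eq_iff)
  qed
  then show ?thesis using A by simp
qed

lemma Min_ordered_block_mono:
  assumes fin: "finite P" and inj: "inj_on Min P" and "1 \<le> i" "i \<le> j" "j \<le> card P"
  shows "Min (ordered_block P i) \<le> Min (ordered_block P j)"
proof (rule ccontr)
  have i: "ordered_block P i \<in> P" "block_rank P (ordered_block P i) + 1 = i"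
    and j: "ordered_block P j \<in> P" "block_rank P (ordered_block P j) + 1 = j"
    using ordered_block_rank[OF fin inj] assms by auto
  assume "\<not> ?thesis"
  then have "block_rank P (ordered_block P j) < block_rank P (ordered_block P i)"
    using block_rank_strict_mono[OF fin j(1) i(1)] by simp
  then show False using i j \<open>i \<le> j\<close> by simp
qed

lemma inj_on_Min_partition:
  assumes "finite A" "partition_on A P"
  shows "inj_on Min P"
proof (rule inj_onI)
  fix B C assume BC: "B \<in> P" "C \<in> P" "Min B = Min C"
  have "B \<noteq> {}" "C \<noteq> {}" "finite B" "finite C"
    using assms BC partition_onD3[OF assms(2)] partition_onD1[OF assms(2)]
    by (auto intro: finite_subset)
  then have "Min B \<in> B \<inter> C" using BC(3) Min_in by (metis IntI)
  then show "B = C" using disjointD[OF partition_onD2[OF assms(2)] BC(1,2)] by blast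
qed

lemma partition_on_permutes_image:
  assumes P: "partition_on A P" and f: "f permutes A"
  shows "partition_on A ((`) f ` P)"
proof -
  have "partition_on (f ` A) ((`) f ` P - {{}})"
    using partition_on_inj_image[OF P] permutes_inj_on[OF f] by blast
  moreover have "{} \<notin> (`) f ` P" using partition_onD3[OF P] by auto
  ultimately show ?thesis using permutes_image[OF f] by simp
qed

lemma ld_edge_lower_child:
  assumes part: "partition_on {1..X (Suc m)} (xi m)"
    and perm: "sigma m permutes {1..X (Suc m)}"
    and edge: "ld_edge T X xi sigma m l' c'" and l: "1 \<le> l" "l \<le> l'"
  shows "\<exists>c. ld_edge T X xi sigma m l c \<and> 1 \<le> c \<and> c \<le> c'"
proof -
  let ?P = "ld_blocks xi sigma m"
  have Ppart: "partition_on {1..X (Suc m)} ?P"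
    unfolding ld_blocks_def by (rule partition_on_permutes_image[OF part perm])
  have fin: "finite ?P" by (rule finite_elements[OF _ Ppart]) simp
  have inj: "inj_on Min ?P" by (rule inj_on_Min_partition[OF _ Ppart]) simp
  have blocks: "B \<noteq> {}" "B \<subseteq> {1..X (Suc m)}" "finite B" if "B \<in> ?P" for B
  proof -
    show "B \<noteq> {}" "B \<subseteq> {1..X (Suc m)}"
      using that partition_onD3[OF Ppart] partition_onD1[OF Ppart] by auto
    then show "finite B" using finite_subset by blast
  qed
  have e: "enat (Suc m) < T" "l' \<le> X m" "l' \<le> card ?P" "c' \<in> ordered_block ?P l'"
    using edge unfolding ld_edge_def by auto
  let ?c = "Min (ordered_block ?P l)"
  have in_P: "ordered_block ?P l \<in> ?P" "ordered_block ?P l' \<in> ?P"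
    using ordered_block_rank[OF fin inj] l e(3) by auto
  have "?c \<in> ordered_block ?P l" using blocks(1,3)[OF in_P(1)] by simp
  moreover have "?c \<le> Min (ordered_block ?P l')"
    using Min_ordered_block_mono[OF fin inj l e(3)] .
  moreover have "Min (ordered_block ?P l') \<le> c'" using blocks(3)[OF in_P(2)] e(4) by simp
  ultimately show ?thesis
    using blocks(2)[OF in_P(1)] l e unfolding ld_edge_def by force
qed

lemma ld_desc_dominated:
  assumes part: "\<And>m. enat (Suc m) < T \<Longrightarrow> partition_on {1..X (Suc m)} (xi m)"
    and perm: "\<And>m. enat (Suc m) < T \<Longrightarrow> sigma m permutes {1..X (Suc m)}"
    and ij: "1 \<le> i" "i \<le> j"
  shows "\<forall>c'\<in>ld_desc T X xi sigma n j d. \<exists>c\<in>ld_desc T X xi sigma n i d. 1 \<le> c \<and> c \<le> c'"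
proof (induction d)
  case 0
  then show ?case using ij by auto
next
  case (Suc d)
  show ?case
  proof
    fix c' assume "c' \<in> ld_desc T X xi sigma n j (Suc d)"
    then obtain l' where l': "l' \<in> ld_desc T X xi sigma n j d" "ld_edge T X xi sigma (n + d) l' c'"
      by auto
    obtain l where l: "l \<in> ld_desc T X xi sigma n i d" "1 \<le> l" "l \<le> l'"
      using Suc l'(1) by blast
    have "enat (Suc (n + d)) < T" using l'(2) unfolding ld_edge_def by blast
    then obtain c where "ld_edge T X xi sigma (n + d) l c" "1 \<le> c" "c \<le> c'"
      using ld_edge_lower_child[OF part perm l'(2) l(2,3)] by blast
    then show "\<exists>c\<in>ld_desc T X xi sigma n i (Suc d). 1 \<le> c \<and> c \<le> c'" using l(1) by auto
  qed
qed

theorem corollary4p2: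
  fixes T :: enat and X :: "nat \<Rightarrow> nat" and k :: "nat \<Rightarrow> nat \<Rightarrow> nat"
    and xi :: "nat \<Rightarrow> nat set set" and sigma :: "nat \<Rightarrow> nat \<Rightarrow> nat"
  assumes Xpos: "\<And>n. enat n < T \<Longrightarrow> X n > 0"
    and ksum: "\<And>n. enat (Suc n) < T \<Longrightarrow> (\<Sum>i=1..X n. k n i) = X (Suc n)"
    and xi_part: "\<And>n. enat (Suc n) < T \<Longrightarrow> partition_on {1..X (Suc n)} (xi n)"
    and xi_sizes: "\<And>n. enat (Suc n) < T \<Longrightarrow>
        image_mset card (mset_set (xi n))
        = filter_mset (\<lambda>c. c \<noteq> 0) (image_mset (k n) (mset_set {1..X n}))"
    and sigma_perm: "\<And>n. enat (Suc n) < T \<Longrightarrow> sigma n permutes {1..X (Suc n)}"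
    and n: "enat n < T"
    and ij: "1 \<le> i" "i \<le> j" "j \<le> X n"
  shows "ld_ext T X xi sigma n j \<le> ld_ext T X xi sigma n i"
proof -
  have "ld_D T X xi sigma n j m = {}" if "ld_D T X xi sigma n i m = {}" for m
    using that ld_desc_dominated[of T X xi sigma, OF xi_part sigma_perm ij(1,2)] unfolding ld_D_def by blast
  then have "{enat m | m. n \<le> m \<and> ld_D T X xi sigma n i m = {}}
      \<subseteq> {enat m | m. n \<le> m \<and> ld_D T X xi sigma n j m = {}}" by blast
  then show ?thesis unfolding ld_ext_def by (rule Inf_superset_mono)
qed

end
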